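(* Let $K_0,K_1\in\mathcal{S}_n$ be an $\mathcal{S}_n$-cute pair with $\delta(K_0,K_1)\ge 4$. Then $\frac12(K_0+K_1)$ is a lens.
   Context: Convex bodies are compact convex non-empty subsets of $\mathbb{R}^n$; $B_2^n$ is the closed Euclidean unit ball; $\delta$ is the Hausdorff distance $\delta(K_0,K_1)=\inf\{\lambda>0: K_0\subseteq K_1+\lambda B_2^n,\ K_1\subseteq K_0+\lambda B_2^n\}$. $\mathcal{S}_n$ is the set of convex bodies in $\mathbb{R}^n$ which are intersections of Euclidean unit balls. A pair $(K_0,K_1)\in\mathcal{S}_n\times\mathcal{S}_n$ is called $\mathcal{S}_n$-cute if $M=\frac{K_0+K_1}{2}$ is the unique body in $\mathcal{S}_n$ satisfying $\delta(K_0,M)=\frac12\delta(K_0,K_1)$ and $\delta(K_1,M)=\frac12\delta(K_0,K_1)$. A lens is a nonempty intersection of two Euclidean balls of radius $1$, i.e. a set $(a+B_2^n)\cap(b+B_2^n)\neq\emptyset$ with $a,b\in\mathbb{R}^n$ (this includes single points and unit balls). *)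

theory Defs
  imports "HOL-Analysis.Analysis"
begin

definition convex_body :: "'a::euclidean_space set \<Rightarrow> bool" where
  "convex_body K \<longleftrightarrow> compact K \<and> convex K \<and> K \<noteq> {}"

definition msum :: "'a::euclidean_space set \<Rightarrow> 'a set \<Rightarrow> 'a set" where
  "msum A B = {x + y | x y. x \<in> A \<and> y \<in> B}"

definition mscale :: "real \<Rightarrow> 'a::euclidean_space set \<Rightarrow> 'a set" where
  "mscale t A = (\<lambda>x. t *\<^sub>R x) ` A"

definition hdist :: "'a::euclidean_space set \<Rightarrow> 'a set \<Rightarrow> real" where
  "hdist K0 K1 = Inf {r. r > 0 \<and> K0 \<subseteq> msum K1 (cball 0 r) \<and> K1 \<subseteq> msum K0 (cball 0 r)}"

definition in_S :: "'a::euclidean_space set \<Rightarrow> bool" where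
  "in_S K \<longleftrightarrow> convex_body K \<and> (\<exists>A. K = \<Inter> ((\<lambda>a. cball a 1) ` A))"

definition S_cute :: "'a::euclidean_space set \<Rightarrow> 'a set \<Rightarrow> bool" where
  "S_cute K0 K1 \<longleftrightarrow> in_S K0 \<and> in_S K1 \<and>
     (let M = mscale (1/2) (msum K0 K1) in
        in_S M \<and> hdist K0 M = hdist K0 K1 / 2 \<and> hdist K1 M = hdist K0 K1 / 2 \<and>
        (\<forall>M'. in_S M' \<and> hdist K0 M' = hdist K0 K1 / 2 \<and> hdist K1 M' = hdist K0 K1 / 2
              \<longrightarrow> M' = M))"

definition lens :: "'a::euclidean_space set \<Rightarrow> bool" where
  "lens L \<longleftrightarrow> (\<exists>a b. cball a 1 \<inter> cball b 1 \<noteq> {} \<and> L = cball a 1 \<inter> cball b 1)"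

end

theory Submission
  imports Defs
begin

text \<open>Let \<open>k\<^sub>1\<close> be a point of \<open>K\<^sub>1\<close> farthest from \<open>K\<^sub>0\<close>, \<open>q\<^sub>0\<close> its nearest point in \<open>K\<^sub>0\<close> and \<open>u\<close>
  the unit vector from \<open>q\<^sub>0\<close> to \<open>k\<^sub>1\<close>. The hyperplanes orthogonal to \<open>u\<close> through \<open>q\<^sub>0\<close> and \<open>k\<^sub>1\<close>
  support \<open>K\<^sub>0\<close> and \<open>K\<^sub>1\<close>, and since both sets are intersections of unit balls they lie in the
  supporting unit balls centred at \<open>q\<^sub>0 - u\<close> and \<open>k\<^sub>1 - u\<close>. So the midpoint set \<open>M\<close> lies in the
  unit ball centred at \<open>(q\<^sub>0 + k\<^sub>1)/2 - u\<close>, and this ball is within \<open>\<delta>/2\<close> of \<open>K\<^sub>0\<close> when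
  \<open>\<delta> \<ge> 4\<close>. With the roles of \<open>K\<^sub>0\<close> and \<open>K\<^sub>1\<close> exchanged, \<open>M\<close> is contained in a lens \<open>L\<close>
  within \<open>\<delta>/2\<close> of both sets. Every point of \<open>K\<^sub>i\<close> is within \<open>\<delta>/2\<close> of \<open>M \<subseteq> L\<close>, so \<open>L\<close> is a
  midpoint of \<open>K\<^sub>0\<close> and \<open>K\<^sub>1\<close> in \<open>\<S>\<^sub>n\<close>, and cuteness forces \<open>L = M\<close>.\<close>

lemma mem_msum_cball_iff: "x \<in> msum A (cball 0 r) \<longleftrightarrow> (\<exists>a\<in>A. dist x a \<le> r)"
proof
  assume "x \<in> msum A (cball 0 r)"
  then obtain a v where "x = a + v" "a \<in> A" "v \<in> cball 0 r" unfolding msum_def by auto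
  then show "\<exists>a\<in>A. dist x a \<le> r" by (intro bexI[of _ a]) (auto simp: dist_norm)
next
  assume "\<exists>a\<in>A. dist x a \<le> r"
  then obtain a where a: "a \<in> A" "dist x a \<le> r" by auto
  then have "x - a \<in> cball 0 r" by (simp add: dist_norm norm_minus_commute)
  with a(1) show "x \<in> msum A (cball 0 r)" unfolding msum_def by force
qed

lemma msum_cball_trans:
  assumes "X \<subseteq> msum Y (cball 0 s)" and "Y \<subseteq> msum Z (cball 0 t)"
  shows "X \<subseteq> msum Z (cball 0 (s + t))"
proof
  fix x assume "x \<in> X"
  then obtain y where y: "y \<in> Y" "dist x y \<le> s" using assms(1) mem_msum_cball_iff by blast
  then obtain z where z: "z \<in> Z" "dist y z \<le> t" using assms(2) mem_msum_cball_iff by blast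
  have "dist x z \<le> s + t" using y z dist_triangle[of x z y] by linarith
  with z(1) show "x \<in> msum Z (cball 0 (s + t))" unfolding mem_msum_cball_iff by blast
qed

lemma msum_commute: "msum A B = msum B A"
  unfolding msum_def using add.commute by blast

lemma mem_midpoints_iff:
  "m \<in> mscale (1/2) (msum K0 K1) \<longleftrightarrow> (\<exists>a\<in>K0. \<exists>b\<in>K1. m = (1/2) *\<^sub>R (a + b))"
  unfolding mscale_def msum_def by blast

text \<open>\<^const>\<open>hdist\<close> is the infimum of this set; for unbounded sets the set is empty and
  \<^const>\<open>hdist\<close> is the junk value \<open>Inf {}\<close>, hence the non-emptiness hypotheses below.\<close>

definition hausdorff_radii :: "'a::euclidean_space set \<Rightarrow> 'a set \<Rightarrow> real set" where
  "hausdorff_radii K0 K1 = {r. r > 0 \<and> K0 \<subseteq> msum K1 (cball 0 r) \<and> K1 \<subseteq> msum K0 (cball 0 r)}"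

lemma hdist_eq_Inf_radii: "hdist A B = Inf (hausdorff_radii A B)"
  unfolding hdist_def hausdorff_radii_def ..

lemma hausdorff_radii_commute: "hausdorff_radii A B = hausdorff_radii B A"
  unfolding hausdorff_radii_def by auto

lemma hdist_commute: "hdist A B = hdist B A"
  unfolding hdist_eq_Inf_radii by (simp only: hausdorff_radii_commute)

lemma hdist_le_radius: "r \<in> hausdorff_radii A B \<Longrightarrow> hdist A B \<le> r"
  unfolding hdist_eq_Inf_radii
  by (rule cInf_lower) (auto simp: hausdorff_radii_def bdd_below_def intro!: exI[of _ 0])

lemma hausdorff_radii_nonempty:
  assumes "bounded A" "bounded B" "A \<noteq> {}" "B \<noteq> {}"
  shows "hausdorff_radii A B \<noteq> {}"
proof -
  obtain R where R: "\<And>x. x \<in> A \<union> B \<Longrightarrow> norm x \<le> R"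
    using assms(1,2) bounded_Un bounded_iff by metis
  have R0: "0 \<le> R" using assms(3) R norm_ge_zero order_trans by blast
  have dist_le: "dist x y \<le> 2 * R + 1" if "x \<in> A \<union> B" "y \<in> A \<union> B" for x y
    using norm_triangle_ineq4[of x y] R[OF that(1)] R[OF that(2)] by (simp add: dist_norm)
  have "A \<subseteq> msum B (cball 0 (2 * R + 1))" "B \<subseteq> msum A (cball 0 (2 * R + 1))"
    using assms(3,4) dist_le unfolding mem_msum_cball_iff subset_iff by blast+
  with R0 have "2 * R + 1 \<in> hausdorff_radii A B" unfolding hausdorff_radii_def by simp
  then show ?thesis by blast
qed

lemma infdist_le_hdist:
  assumes "hausdorff_radii A B \<noteq> {}" "k \<in> B"
  shows "infdist k A \<le> hdist A B"
  unfolding hdist_eq_Inf_radii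
proof (rule cInf_greatest[OF assms(1)])
  fix r assume "r \<in> hausdorff_radii A B"
  then have "k \<in> msum A (cball 0 r)" using assms(2) unfolding hausdorff_radii_def by blast
  then obtain a where "a \<in> A" "dist k a \<le> r" unfolding mem_msum_cball_iff by blast
  then show "infdist k A \<le> r" using infdist_le[of a A k] by linarith
qed

lemma hausdorff_radii_add:
  "s \<in> hausdorff_radii A B \<Longrightarrow> t \<in> hausdorff_radii B C \<Longrightarrow> s + t \<in> hausdorff_radii A C"
  unfolding hausdorff_radii_def using msum_cball_trans[of A B s C t] msum_cball_trans[of C B t A s]
  by (simp add: add.commute)

lemma hdist_triangle:
  assumes "hausdorff_radii A B \<noteq> {}" "hausdorff_radii B C \<noteq> {}"
  shows "hdist A C \<le> hdist A B + hdist B C"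
proof -
  have "hdist A C - t \<le> hdist A B" if t: "t \<in> hausdorff_radii B C" for t
    unfolding hdist_eq_Inf_radii[of A B]
  proof (rule cInf_greatest[OF assms(1)])
    fix s assume "s \<in> hausdorff_radii A B"
    then have "hdist A C \<le> s + t" using hausdorff_radii_add t hdist_le_radius by blast
    then show "hdist A C - t \<le> s" by simp
  qed
  then have "hdist A C - hdist A B \<le> Inf (hausdorff_radii B C)"
    using assms(2) by (intro cInf_greatest) (auto simp: algebra_simps)
  then show ?thesis by (simp add: hdist_eq_Inf_radii[of B C])
qed

lemma in_SD:
  assumes "in_S K"
  shows "compact K" "closed K" "convex K" "K \<noteq> {}"
  using assms compact_imp_closed unfolding in_S_def convex_body_def by auto

lemma in_S_subset_cball:
  assumes "in_S K"
  obtains a where "K \<subseteq> cball a 1"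
proof -
  obtain A where A: "K = \<Inter>((\<lambda>a. cball a 1) ` A)" using assms unfolding in_S_def by blast
  have "A \<noteq> {}"
  proof
    assume "A = {}"
    then have "K = UNIV" using A by simp
    then show False using in_SD(1)[OF assms] compact_imp_bounded not_bounded_UNIV by metis
  qed
  with A that show ?thesis by blast
qed

lemma lens_imp_in_S:
  assumes "lens L"
  shows "in_S L"
proof -
  obtain a b where L: "L = cball a 1 \<inter> cball b 1" "L \<noteq> {}" using assms unfolding lens_def by blast
  then have "compact L" "convex L" "L = \<Inter>((\<lambda>c. cball c 1) ` {a, b})"
    by (auto simp: compact_Int convex_Int)
  with L(2) show ?thesis unfolding in_S_def convex_body_def by blast
qed

lemma hdist_le_2_if_subset:
  assumes "in_S K0" "K1 \<subseteq> K0" "K1 \<noteq> {}"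
  shows "hdist K0 K1 \<le> 2"
proof -
  obtain a where a: "K0 \<subseteq> cball a 1" using in_S_subset_cball[OF assms(1)] .
  obtain k where k: "k \<in> K1" using assms(3) by blast
  have "dist x k \<le> 2" if "x \<in> K0" for x
  proof -
    have "dist a x \<le> 1" "dist a k \<le> 1" using a that k assms(2) by auto
    then show ?thesis using dist_triangle[of x k a] by (simp add: dist_commute)
  qed
  then have "K0 \<subseteq> msum K1 (cball 0 2)" using k unfolding subset_iff mem_msum_cball_iff by blast
  moreover have "K1 \<subseteq> msum K0 (cball 0 2)" using assms(2) unfolding subset_iff mem_msum_cball_iff by force
  ultimately show ?thesis by (intro hdist_le_radius) (simp add: hausdorff_radii_def)
qed

lemma norm_perturbation_le_one:
  fixes X g u :: "'a::real_inner"
  assumes X: "norm X \<le> 1" and Xg: "norm (X - g) \<le> 1" and u: "norm u = 1"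
    and "0 \<le> \<mu>" "0 \<le> \<eta>" "\<mu> \<le> 1 + \<eta>"
    and bracket: "\<eta> * (2 + \<eta>) + 2 * \<eta> * \<mu> * inner u g \<le> \<mu> * (1 - \<mu>) * inner g g"
  shows "norm (X - \<eta> *\<^sub>R u - \<mu> *\<^sub>R g) \<le> 1"
proof -
  have uu: "inner u u = 1" using u by (simp add: dot_square_norm)
  have "inner X X \<le> 1" using X by (simp add: dot_square_norm power_le_one)
  moreover have "inner (X - g) (X - g) \<le> 1" using Xg by (simp add: dot_square_norm power_le_one)
  ultimately have "(1 + \<eta> - \<mu>) * (inner X X - 1) \<le> 0" "\<mu> * (inner (X - g) (X - g) - 1) \<le> 0"
    using assms(4-6) by (auto intro: mult_nonneg_nonpos)
  moreover have "0 \<le> \<eta> * inner (X + u) (X + u)" using assms(5) by simp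
  moreover have "inner (X - \<eta> *\<^sub>R u - \<mu> *\<^sub>R g) (X - \<eta> *\<^sub>R u - \<mu> *\<^sub>R g) - 1
      = (1 + \<eta> - \<mu>) * (inner X X - 1) + \<mu> * (inner (X - g) (X - g) - 1)
        - \<eta> * inner (X + u) (X + u)
        + (\<eta> * (2 + \<eta>) + 2 * \<eta> * \<mu> * inner u g - \<mu> * (1 - \<mu>) * inner g g)"
    using uu by (simp add: inner_commute algebra_simps power2_eq_square)
  ultimately have "inner (X - \<eta> *\<^sub>R u - \<mu> *\<^sub>R g) (X - \<eta> *\<^sub>R u - \<mu> *\<^sub>R g) \<le> 1"
    using bracket by linarith
  then show ?thesis by (simp add: dot_square_norm power_le_one_iff)
qed

lemma perturbation_parameters_exist:
  fixes \<delta> G :: real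
  assumes \<delta>: "0 \<le> \<delta>" and G: "2 * \<delta> < G"
  obtains \<mu> \<eta> where "0 < \<mu>" "0 \<le> \<eta>" "\<mu> \<le> 1 + \<eta>" "\<mu> * \<delta> < \<eta>"
    "\<eta> * (2 + \<eta>) - 2 * \<eta> * \<mu> * \<delta> \<le> \<mu> * (1 - \<mu>) * G"
proof -
  \<comment> \<open>Any \<open>\<delta> < c < G/2\<close> works: with \<open>\<eta> = \<mu> c\<close> the last condition becomes
    \<open>2c + \<mu> (c\<^sup>2 - 2c\<delta> + G) \<le> G\<close>, which holds for small \<open>\<mu> > 0\<close>.\<close>
  define c where "c = (\<delta> + G/2) / 2"
  define \<mu> where "\<mu> = (G/2 - \<delta>) / (c\<^sup>2 + G + 1)"
  have "0 \<le> G" using \<delta> G by linarith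
  then have den: "0 < c\<^sup>2 + G + 1" by (simp add: add_nonneg_pos)
  have "0 < \<mu>" unfolding \<mu>_def using den G by (intro divide_pos_pos) auto
  moreover have "\<mu> \<le> 1" unfolding \<mu>_def pos_divide_le_eq[OF den] mult_1
    using \<delta> \<open>0 \<le> G\<close> zero_le_power2[of c] by linarith
  ultimately have \<mu>: "0 < \<mu>" "\<mu> \<le> 1" .
  have c: "\<delta> < c" "0 \<le> c" using G \<delta> by (auto simp: c_def)
  have "\<mu> * (c\<^sup>2 - 2 * c * \<delta> + G) \<le> \<mu> * (c\<^sup>2 + G + 1)"
    using \<mu> mult_nonneg_nonneg[OF c(2) \<delta>] by (intro mult_left_mono) auto
  also have "\<dots> = G - 2 * c" using den by (simp add: \<mu>_def c_def field_simps)
  finally have "\<mu> * (\<mu> * (c\<^sup>2 - 2 * c * \<delta> + G) - (G - 2 * c)) \<le> 0"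
    using \<mu>(1) by (simp add: mult_nonneg_nonpos)
  moreover have "(\<mu> * c) * (2 + \<mu> * c) - 2 * (\<mu> * c) * \<mu> * \<delta> - \<mu> * (1 - \<mu>) * G
      = \<mu> * (\<mu> * (c\<^sup>2 - 2 * c * \<delta> + G) - (G - 2 * c))"
    by (simp add: algebra_simps power2_eq_square)
  ultimately have "(\<mu> * c) * (2 + \<mu> * c) - 2 * (\<mu> * c) * \<mu> * \<delta> \<le> \<mu> * (1 - \<mu>) * G"
    by linarith
  moreover have "0 \<le> \<mu> * c" "\<mu> * \<delta> < \<mu> * c" using \<mu>(1) c by simp_all
  ultimately show ?thesis using that[of \<mu> "\<mu> * c"] \<mu> by linarith
qed

text \<open>If some \<open>z \<in> K\<close> lay outside the ball, the point \<open>p + \<eta> u + \<mu> (z - p)\<close> would, for suitable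
  small \<open>\<mu>, \<eta> > 0\<close>, still lie in every unit ball containing \<open>p\<close> and \<open>z\<close>, hence in \<open>K\<close>, and it is
  strictly further in direction \<open>u\<close> than \<open>p\<close>.\<close>

lemma Inter_unit_cballs_subset_supporting_cball:
  fixes p u :: "'a::euclidean_space"
  assumes K: "K = \<Inter>((\<lambda>a. cball a 1) ` A)" and p: "p \<in> K" and u: "norm u = 1"
    and p_max: "\<forall>x\<in>K. inner x u \<le> inner p u"
  shows "K \<subseteq> cball (p - u) 1"
proof
  fix z assume z: "z \<in> K"
  show "z \<in> cball (p - u) 1"
  proof (rule ccontr)
    assume "z \<notin> cball (p - u) 1"
    define g where "g = z - p"
    have uu: "inner u u = 1" using u by (simp add: dot_square_norm)
    have "0 \<le> - inner u g" using p_max z unfolding g_def by (auto simp: inner_diff_right inner_commute)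
    moreover have "1 < dist z (p - u)" using \<open>z \<notin> cball (p - u) 1\<close> by (simp add: dist_commute)
    then have "1 < norm (g + u)" by (simp add: g_def dist_norm algebra_simps)
    then have "1 < inner (g + u) (g + u)" by (simp add: dot_square_norm)
    then have "2 * - inner u g < inner g g" using uu by (simp add: inner_add_left inner_add_right inner_commute)
    ultimately obtain \<mu> \<eta> where \<mu>: "0 < \<mu>" and \<eta>: "0 \<le> \<eta>" "\<mu> \<le> 1 + \<eta>" and gain: "- \<mu> * inner u g < \<eta>"
      and bracket: "\<eta> * (2 + \<eta>) + 2 * \<eta> * \<mu> * inner u g \<le> \<mu> * (1 - \<mu>) * inner g g"
      using perturbation_parameters_exist[of "- inner u g" "inner g g"] by auto
    have "p + \<eta> *\<^sub>R u + \<mu> *\<^sub>R g \<in> cball a 1" if "a \<in> A" for a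
    proof -
      have "norm (a - p) \<le> 1" "norm (a - p - g) \<le> 1" using p z that by (auto simp: K g_def dist_norm)
      from norm_perturbation_le_one[OF this u less_imp_le[OF \<mu>] \<eta> bracket]
      show ?thesis by (simp add: dist_norm algebra_simps)
    qed
    then have "p + \<eta> *\<^sub>R u + \<mu> *\<^sub>R g \<in> K" by (simp add: K)
    moreover have "inner (p + \<eta> *\<^sub>R u + \<mu> *\<^sub>R g) u = inner p u + \<eta> + \<mu> * inner u g"
      using uu by (simp add: inner_add_left inner_commute[of g u])
    ultimately show False using p_max gain by fastforce
  qed
qed

lemma farthest_point_common_support:
  fixes K0 K1 :: "'a::euclidean_space set"
  assumes K0: "closed K0" "convex K0" "K0 \<noteq> {}" and K1: "compact K1" "\<not> K1 \<subseteq> K0"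
  obtains q0 k1 u where "q0 \<in> K0" "k1 \<in> K1" "norm u = 1" "k1 - q0 = infdist k1 K0 *\<^sub>R u"
    "\<forall>x\<in>K0. inner x u \<le> inner q0 u" "\<forall>x\<in>K1. inner x u \<le> inner k1 u"
proof -
  obtain y where y: "y \<in> K1" "y \<notin> K0" using K1(2) by blast
  have "continuous_on K1 (\<lambda>x. infdist x K0)" by (intro continuous_on_infdist continuous_on_id)
  then obtain k1 where k1: "k1 \<in> K1" and k1_max: "\<And>x. x \<in> K1 \<Longrightarrow> infdist x K0 \<le> infdist k1 K0"
    using continuous_attains_sup[OF K1(1)] y(1) by blast
  define D where "D = infdist k1 K0"
  obtain q0 where q0: "q0 \<in> K0" "D = dist k1 q0"
    using infdist_attains_inf[OF K0(1,3)] unfolding D_def by metis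
  have "0 < infdist y K0" using y in_closed_iff_infdist_zero[OF K0(1,3)] infdist_nonneg
    by (metis order_neq_le_trans)
  then have D: "0 < D" using k1_max[OF y(1)] by (simp add: D_def)
  define u where "u = (1/D) *\<^sub>R (k1 - q0)"
  have k1_q0: "k1 - q0 = D *\<^sub>R u" unfolding u_def using D by simp
  have u: "norm u = 1" unfolding u_def using D q0(2) by (simp add: dist_norm)
  have q0_max: "inner x u \<le> inner q0 u" if x: "x \<in> K0" for x
  proof -
    have "dist k1 q0 \<le> dist k1 z" if "z \<in> K0" for z
      using infdist_le[OF that, of k1] q0(2) by (simp add: D_def)
    then have "inner (D *\<^sub>R u) (x - q0) \<le> 0"
      using any_closest_point_dot[OF K0(2,1) q0(1) x] k1_q0 by metis
    then have "inner u (x - q0) \<le> 0" using D by (simp add: mult_le_0_iff)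
    then show ?thesis by (simp add: inner_diff_right inner_commute)
  qed
  have k1_max_u: "inner x u \<le> inner k1 u" if x: "x \<in> K1" for x
  proof -
    obtain y where y: "y \<in> K0" "infdist x K0 = dist x y"
      using infdist_attains_inf[OF K0(1,3)] by metis
    have "inner (x - y) u \<le> norm (x - y) * norm u" by (rule norm_cauchy_schwarz)
    then have "inner x u - inner y u \<le> D"
      using u y(2) k1_max[OF x] by (simp add: inner_diff_left dist_norm D_def)
    moreover have "inner k1 u - inner q0 u = D"
      using arg_cong[OF k1_q0, of "\<lambda>v. inner v u"] u by (simp add: inner_diff_left dot_square_norm)
    ultimately show ?thesis using q0_max[OF y(1)] by linarith
  qed
  show ?thesis using that q0(1) k1 u k1_q0 q0_max k1_max_u unfolding D_def by blast
qed

lemma in_S_common_supporting_cballs: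
  fixes K0 K1 :: "'a::euclidean_space set"
  assumes K0: "in_S K0" and K1: "in_S K1" and "\<not> K1 \<subseteq> K0"
  obtains q0 k1 u where "q0 \<in> K0" "k1 \<in> K1" "norm u = 1" "k1 - q0 = infdist k1 K0 *\<^sub>R u"
    "K0 \<subseteq> cball (q0 - u) 1" "K1 \<subseteq> cball (k1 - u) 1"
proof -
  obtain q0 k1 u where q0: "q0 \<in> K0" and k1: "k1 \<in> K1" and u: "norm u = 1"
    and k1_q0: "k1 - q0 = infdist k1 K0 *\<^sub>R u"
    and q0_max: "\<forall>x\<in>K0. inner x u \<le> inner q0 u" and k1_max: "\<forall>x\<in>K1. inner x u \<le> inner k1 u"
    using farthest_point_common_support[OF in_SD(2,3,4)[OF K0] in_SD(1)[OF K1] assms(3)] .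
  obtain A0 where "K0 = \<Inter>((\<lambda>a. cball a 1) ` A0)" using K0 unfolding in_S_def by blast
  from Inter_unit_cballs_subset_supporting_cball[OF this q0 u q0_max]
  have "K0 \<subseteq> cball (q0 - u) 1" .
  moreover obtain A1 where "K1 = \<Inter>((\<lambda>a. cball a 1) ` A1)" using K1 unfolding in_S_def by blast
  from Inter_unit_cballs_subset_supporting_cball[OF this k1 u k1_max]
  have "K1 \<subseteq> cball (k1 - u) 1" .
  ultimately show ?thesis using that q0 k1 u k1_q0 by blast
qed

lemma midpoints_subset_cball_midpoint:
  fixes a b :: "'a::euclidean_space"
  assumes "A \<subseteq> cball a 1" "B \<subseteq> cball b 1"
  shows "mscale (1/2) (msum A B) \<subseteq> cball ((1/2) *\<^sub>R (a + b)) 1"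
proof
  fix m assume "m \<in> mscale (1/2) (msum A B)"
  then obtain x y where "x \<in> A" "y \<in> B" and m: "m = (1/2) *\<^sub>R (x + y)"
    unfolding mem_midpoints_iff by blast
  then have "norm (x - a) \<le> 1" "norm (y - b) \<le> 1"
    using assms by (auto simp: dist_norm norm_minus_commute)
  then have "norm ((x - a) + (y - b)) \<le> 2"
    using norm_triangle_ineq[of "x - a" "y - b"] by linarith
  moreover have "m - (1/2) *\<^sub>R (a + b) = (1/2) *\<^sub>R ((x - a) + (y - b))"
    unfolding m by (simp add: algebra_simps)
  ultimately have "norm (m - (1/2) *\<^sub>R (a + b)) \<le> 1" by simp
  then show "m \<in> cball ((1/2) *\<^sub>R (a + b)) 1" by (simp add: dist_norm norm_minus_commute)
qed

lemma midpoints_subset_cball_within_half_hdist: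
  fixes K0 K1 :: "'a::euclidean_space set"
  assumes K0: "in_S K0" and K1: "in_S K1" and d: "hdist K0 K1 \<ge> 4"
  obtains c where "mscale (1/2) (msum K0 K1) \<subseteq> cball c 1"
    "cball c 1 \<subseteq> msum K0 (cball 0 (hdist K0 K1 / 2))"
proof -
  have "\<not> K1 \<subseteq> K0"
  proof
    assume "K1 \<subseteq> K0"
    then have "hdist K0 K1 \<le> 2" using hdist_le_2_if_subset[OF K0] in_SD(4)[OF K1] by blast
    with d show False by simp
  qed
  then obtain q0 k1 u where q0: "q0 \<in> K0" and k1: "k1 \<in> K1" and u: "norm u = 1"
    and k1_q0: "k1 - q0 = infdist k1 K0 *\<^sub>R u"
    and balls: "K0 \<subseteq> cball (q0 - u) 1" "K1 \<subseteq> cball (k1 - u) 1"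
    using in_S_common_supporting_cballs[OF K0 K1] by blast
  define c where "c = (1/2) *\<^sub>R ((q0 - u) + (k1 - u))"
  define D where "D = infdist k1 K0"
  have "hausdorff_radii K0 K1 \<noteq> {}"
    using hausdorff_radii_nonempty compact_imp_bounded in_SD[OF K0] in_SD[OF K1] by metis
  then have D: "0 \<le> D" "D \<le> hdist K0 K1"
    unfolding D_def using infdist_nonneg infdist_le_hdist[OF _ k1] by auto
  have "c - q0 = (1/2) *\<^sub>R (k1 - q0) - u"
    unfolding c_def by (simp add: algebra_simps flip: scaleR_add_left)
  also have "\<dots> = (D/2 - 1) *\<^sub>R u" unfolding k1_q0 D_def by (simp add: algebra_simps)
  \<comment> \<open>This is where \<open>\<delta>(K\<^sub>0, K\<^sub>1) \<ge> 4\<close> enters, as \<open>D\<close> may be small.\<close>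
  finally have "dist c q0 \<le> hdist K0 K1 / 2 - 1" using u D d by (simp add: dist_norm)
  then have "dist x q0 \<le> hdist K0 K1 / 2" if "x \<in> cball c 1" for x
    using that dist_triangle[of x q0 c] by (simp add: dist_commute)
  then have "cball c 1 \<subseteq> msum K0 (cball 0 (hdist K0 K1 / 2))"
    using q0 unfolding subset_iff mem_msum_cball_iff by blast
  with midpoints_subset_cball_midpoint[OF balls] that show ?thesis unfolding c_def by blast
qed

lemma subset_msum_midpoints:
  fixes K0 K1 :: "'a::euclidean_space set"
  assumes K1: "closed K1" "K1 \<noteq> {}" and radii: "hausdorff_radii K0 K1 \<noteq> {}"
  shows "K0 \<subseteq> msum (mscale (1/2) (msum K0 K1)) (cball 0 (hdist K0 K1 / 2))"
proof
  fix k assume k: "k \<in> K0"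
  obtain b where b: "b \<in> K1" "infdist k K1 = dist k b" using infdist_attains_inf[OF K1] by metis
  have "dist k b \<le> hdist K0 K1"
    using infdist_le_hdist[of K1 K0 k] radii k b(2) by (simp add: hausdorff_radii_commute hdist_commute)
  moreover have "dist k ((1/2) *\<^sub>R (k + b)) = dist k b / 2"
  proof -
    have "k - (1/2) *\<^sub>R (k + b) = (1/2) *\<^sub>R (k - b)" by (simp add: algebra_simps flip: scaleR_add_left)
    then show ?thesis by (simp add: dist_norm)
  qed
  moreover have "(1/2) *\<^sub>R (k + b) \<in> mscale (1/2) (msum K0 K1)"
    unfolding mem_midpoints_iff using k b(1) by blast
  ultimately show "k \<in> msum (mscale (1/2) (msum K0 K1)) (cball 0 (hdist K0 K1 / 2))"
    unfolding mem_msum_cball_iff by (intro bexI[of _ "(1/2) *\<^sub>R (k + b)"]) auto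
qed

lemma hdist_eq_half_if_midpoints_subset:
  fixes K0 K1 L :: "'a::euclidean_space set"
  assumes K0: "in_S K0" and K1: "in_S K1" and d: "0 < hdist K0 K1"
    and M_L: "mscale (1/2) (msum K0 K1) \<subseteq> L"
    and L_K0: "L \<subseteq> msum K0 (cball 0 (hdist K0 K1 / 2))"
    and L_K1: "L \<subseteq> msum K1 (cball 0 (hdist K0 K1 / 2))"
  shows "hdist K0 L = hdist K0 K1 / 2" "hdist K1 L = hdist K0 K1 / 2"
proof -
  have radii: "hausdorff_radii K0 K1 \<noteq> {}"
    using hausdorff_radii_nonempty compact_imp_bounded in_SD[OF K0] in_SD[OF K1] by metis
  have "K0 \<subseteq> msum (mscale (1/2) (msum K0 K1)) (cball 0 (hdist K0 K1 / 2))"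
    using subset_msum_midpoints in_SD[OF K1] radii by blast
  then have K0_L: "K0 \<subseteq> msum L (cball 0 (hdist K0 K1 / 2))"
    using M_L unfolding subset_iff mem_msum_cball_iff by blast
  have "K1 \<subseteq> msum (mscale (1/2) (msum K0 K1)) (cball 0 (hdist K0 K1 / 2))"
    using subset_msum_midpoints[of K0 K1] in_SD[OF K0] radii
    by (simp add: msum_commute[of K0] hdist_commute[of K0] hausdorff_radii_commute[of K0])
  then have K1_L: "K1 \<subseteq> msum L (cball 0 (hdist K0 K1 / 2))"
    using M_L unfolding subset_iff mem_msum_cball_iff by blast
  have "hdist K0 K1 / 2 \<in> hausdorff_radii K0 L" "hdist K0 K1 / 2 \<in> hausdorff_radii L K1"
    using K0_L L_K0 K1_L L_K1 d by (simp_all add: hausdorff_radii_def)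
  then have "hdist K0 L \<le> hdist K0 K1 / 2" "hdist L K1 \<le> hdist K0 K1 / 2"
    and "hdist K0 K1 \<le> hdist K0 L + hdist L K1"
    using hdist_le_radius hdist_triangle by blast+
  then show "hdist K0 L = hdist K0 K1 / 2" "hdist K1 L = hdist K0 K1 / 2"
    by (simp_all add: hdist_commute[of L])
qed

theorem lemma8:
  fixes K0 K1 :: "'a::euclidean_space set"
  assumes "in_S K0" and "in_S K1"
    and "S_cute K0 K1"
    and "hdist K0 K1 \<ge> 4"
  shows "lens (mscale (1/2) (msum K0 K1))"
proof -
  define d where "d = hdist K0 K1"
  define M where "M = mscale (1/2) (msum K0 K1)"
  obtain c0 where c0: "M \<subseteq> cball c0 1" "cball c0 1 \<subseteq> msum K0 (cball 0 (d/2))"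
    using midpoints_subset_cball_within_half_hdist[OF assms(1,2,4)] unfolding M_def d_def by blast
  obtain c1 where c1: "M \<subseteq> cball c1 1" "cball c1 1 \<subseteq> msum K1 (cball 0 (d/2))"
    using midpoints_subset_cball_within_half_hdist[OF assms(2,1)] assms(4)
    unfolding M_def d_def msum_commute[of K1] hdist_commute[of K1] by blast
  define L where "L = cball c0 1 \<inter> cball c1 1"
  have "M \<noteq> {}" using in_SD(4)[OF assms(1)] in_SD(4)[OF assms(2)]
    unfolding M_def mscale_def msum_def by blast
  with c0 c1 have "lens L" unfolding lens_def L_def by blast
  have "M \<subseteq> L" "L \<subseteq> msum K0 (cball 0 (d/2))" "L \<subseteq> msum K1 (cball 0 (d/2))"
    using c0 c1 unfolding L_def by auto
  moreover have "0 < hdist K0 K1" using assms(4) by simp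
  ultimately have "hdist K0 L = d/2" "hdist K1 L = d/2"
    using hdist_eq_half_if_midpoints_subset[OF assms(1,2)] unfolding M_def d_def by blast+
  with \<open>lens L\<close> assms(3) have "L = M"
    unfolding S_cute_def Let_def M_def d_def using lens_imp_in_S by blast
  with \<open>lens L\<close> show ?thesis by (simp add: M_def)
qed

end
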